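(* Let $X$ be a nonempty set. The monoid $FT^1(X)$ is an idempotent generated regular monoid. Moreover, if $u=g_0g_1\cdots g_n\in\Gamma(X)^+$ (with $g_j\in\Gamma(X)$) is such that there exists $k$ with $0<k<n$, $g_{j-1}\in\{g_j^l,g_j^r\}$ for all $1\le j\le k$, and $g_j\in\{g_{j-1}^l,g_{j-1}^r\}$ for all $k<j\le n$, then $[g_ng_{n-1}\cdots g_0]$ is an inverse of $[u]$ in $FT^1(X)$.
   Context: Let $1$ be a symbol not in $X$. Elements of height $\ge 2$ are triples $g=(g^l,g^c,g^r)$; $\Gamma_0(X)=\{1\}$, $\Gamma_1(X)=X$, each $x\in X$ identified with the triple $(1,x,1)$ (so $x^l=x^r=1$); for $i\ge 2$, $\Gamma_i(X)$ is the set of triples $g\in\Gamma_{i-1}(X)\times\Gamma_{i-2}(X)\times\Gamma_{i-1}(X)$ with $g^l\neq g^r$ and $g^c\in\{(g^l)^l,(g^l)^r\}\cap\{(g^r)^l,(g^r)^r\}$; $\Gamma(X)=\bigcup_{i\ge0}\Gamma_i(X)$. Let $\rho$ be the smallest congruence on $\Gamma(X)^+$ containing $(1g,g),(g1,g),(gg,g)$ for all $g\in\Gamma(X)$ and $(g^cg^lg,g)$, $(gg^rg^c,g)$, $(g^rg^cgg^cg^l,g^rg^cg^l)$ for all $g\in\Gamma_i(X)$, $i\ge2$. $FT^1(X)=\Gamma(X)^+/\rho$ and $[u]$ is the class of $u$. An inverse of $a$ is $b$ with $aba=a$, $bab=b$. *)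

theory Defs
  imports "HOL-Algebra.Group"
begin

text \<open>Elements of Gamma(X): the symbol 1, the letters x (identified with (1,x,1)),
  and triples (g^l, g^c, g^r).\<close>
datatype 'a gam = GOne | GX 'a | GT "'a gam" "'a gam" "'a gam"

fun gl :: "'a gam \<Rightarrow> 'a gam" where
  "gl (GT a c b) = a" | "gl (GX x) = GOne" | "gl GOne = GOne"
fun gr :: "'a gam \<Rightarrow> 'a gam" where
  "gr (GT a c b) = b" | "gr (GX x) = GOne" | "gr GOne = GOne"
fun gc :: "'a gam \<Rightarrow> 'a gam" where
  "gc (GT a c b) = c" | "gc (GX x) = GX x" | "gc GOne = GOne"

inductive Gamma_i :: "'a set \<Rightarrow> nat \<Rightarrow> 'a gam \<Rightarrow> bool" for X where
  g0: "Gamma_i X 0 GOne"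
| g1: "x \<in> X \<Longrightarrow> Gamma_i X 1 (GX x)"
| gT: "\<lbrakk> Gamma_i X (Suc i) a; Gamma_i X i c; Gamma_i X (Suc i) b; a \<noteq> b;
        c \<in> {gl a, gr a} \<inter> {gl b, gr b} \<rbrakk> \<Longrightarrow> Gamma_i X (Suc (Suc i)) (GT a c b)"

definition Gamma :: "'a set \<Rightarrow> 'a gam set" where
  "Gamma X = {g. \<exists>i. Gamma_i X i g}"

definition words :: "'a set \<Rightarrow> 'a gam list set" where
  "words X = {u. u \<noteq> [] \<and> set u \<subseteq> Gamma X}"

inductive rho :: "'a set \<Rightarrow> 'a gam list \<Rightarrow> 'a gam list \<Rightarrow> bool" for X where
  gen1: "g \<in> Gamma X \<Longrightarrow> rho X [GOne, g] [g]"
| gen2: "g \<in> Gamma X \<Longrightarrow> rho X [g, GOne] [g]"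
| gen3: "g \<in> Gamma X \<Longrightarrow> rho X [g, g] [g]"
| gen4: "Gamma_i X i g \<Longrightarrow> 2 \<le> i \<Longrightarrow> rho X [gc g, gl g, g] [g]"
| gen5: "Gamma_i X i g \<Longrightarrow> 2 \<le> i \<Longrightarrow> rho X [g, gr g, gc g] [g]"
| gen6: "Gamma_i X i g \<Longrightarrow> 2 \<le> i \<Longrightarrow>
           rho X [gr g, gc g, g, gc g, gl g] [gr g, gc g, gl g]"
| refl: "u \<in> words X \<Longrightarrow> rho X u u"
| sym: "rho X u v \<Longrightarrow> rho X v u"
| trans: "rho X u v \<Longrightarrow> rho X v w \<Longrightarrow> rho X u w"
| ctx: "rho X u v \<Longrightarrow> set p \<subseteq> Gamma X \<Longrightarrow> set q \<subseteq> Gamma X \<Longrightarrow>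
           rho X (p @ u @ q) (p @ v @ q)"

definition rho_class :: "'a set \<Rightarrow> 'a gam list \<Rightarrow> 'a gam list set" where
  "rho_class X u = {v. rho X u v}"

definition FT1 :: "'a set \<Rightarrow> 'a gam list set monoid" where
  "FT1 X = \<lparr> carrier = rho_class X ` words X,
             mult = (\<lambda>A B. {w. \<exists>u\<in>A. \<exists>v\<in>B. rho X (u @ v) w}),
             one = rho_class X [GOne] \<rparr>"

definition idempotent_generated :: "('b, 'c) monoid_scheme \<Rightarrow> bool" where
  "idempotent_generated M \<longleftrightarrow>
     (\<forall>a \<in> carrier M. \<exists>es. set es \<subseteq> {e \<in> carrier M. e \<otimes>\<^bsub>M\<^esub> e = e} \<and>
        a = foldr (\<lambda>e acc. e \<otimes>\<^bsub>M\<^esub> acc) es \<one>\<^bsub>M\<^esub>)"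

definition regular_monoid :: "('b, 'c) monoid_scheme \<Rightarrow> bool" where
  "regular_monoid M \<longleftrightarrow> monoid M \<and>
     (\<forall>a \<in> carrier M. \<exists>b \<in> carrier M. a \<otimes>\<^bsub>M\<^esub> b \<otimes>\<^bsub>M\<^esub> a = a)"

definition is_inverse :: "('b, 'c) monoid_scheme \<Rightarrow> 'b \<Rightarrow> 'b \<Rightarrow> bool" where
  "is_inverse M a b \<longleftrightarrow> a \<otimes>\<^bsub>M\<^esub> b \<otimes>\<^bsub>M\<^esub> a = a \<and> b \<otimes>\<^bsub>M\<^esub> a \<otimes>\<^bsub>M\<^esub> b = b"

end

(* A mountain is a word that climbs from child to parent up to a peak and then descends from
   parent to child. The relations g^c g^l g ~ g and g g^r g^c ~ g, together with g g ~ g, give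
   g h g ~ g for every child h of g; peeling off the two slopes one letter at a time shows
   w (rev w) w ~ w for a mountain w, so [rev w] is an inverse of [w]. The word of the last claim
   is a mountain with peak g_k.
   Every word is equivalent to a mountain: each generator g is equivalent to a mountain climbing
   from 1 to g and back down to 1, and between two consecutive mountains lies a valley. Its
   bottom letter m sits between two parents a and b of m; if a = b then a m a ~ a, and otherwise
   (b, m, a) is a generator one level up and g^r g^c g^l ~ g^r g g^l turns a m b into the peak
   a (b, m, a) b. Idempotent generation is immediate from g g ~ g. *)

theory Submission
  imports Defs
begin

(* g \<noteq> GOne rules out the junk values gl GOne = gr GOne = GOne. *)
definition child_of :: "'a gam \<Rightarrow> 'a gam \<Rightarrow> bool" where
  "child_of h g \<longleftrightarrow> g \<noteq> GOne \<and> h \<in> {gl g, gr g}"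

abbreviation ascending :: "'a gam list \<Rightarrow> bool" where
  "ascending \<equiv> successively child_of"

abbreviation descending :: "'a gam list \<Rightarrow> bool" where
  "descending \<equiv> successively (\<lambda>g h. child_of h g)"

definition mountain :: "'a gam list \<Rightarrow> bool" where
  "mountain w \<longleftrightarrow> (\<exists>A p B. w = A @ p # B \<and> ascending (A @ [p]) \<and> descending (p # B))"

lemma mountain_not_Nil: "mountain w \<Longrightarrow> w \<noteq> []"
  by (auto simp: mountain_def)

lemma mountain_if_ascending: "w \<noteq> [] \<Longrightarrow> ascending w \<Longrightarrow> mountain w"
  unfolding mountain_def by (cases w rule: rev_cases) force+

lemma mountain_if_descending: "w \<noteq> [] \<Longrightarrow> descending w \<Longrightarrow> mountain w"
  unfolding mountain_def by (cases w) force+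

lemma mountain_rev [simp]: "mountain (rev w) \<longleftrightarrow> mountain w"
proof -
  have "mountain (rev w)" if "mountain w" for w :: "'a gam list"
  proof -
    from that obtain A p B where "w = A @ p # B" "ascending (A @ [p])" "descending (p # B)"
      by (auto simp: mountain_def)
    moreover have "ascending (rev B @ [p])"
      using \<open>descending (p # B)\<close> by (metis rev.simps(2) successively_rev)
    moreover have "descending (p # rev A)"
      using \<open>ascending (A @ [p])\<close> by (metis rev.simps(2) rev_rev_ident successively_rev)
    ultimately have "rev w = rev B @ p # rev A \<and> ascending (rev B @ [p]) \<and> descending (p # rev A)"
      by simp
    then show ?thesis by (auto simp: mountain_def)
  qed
  from this this[of "rev w"] show ?thesis by auto
qed

lemma mountain_append_left:
  assumes "mountain w" "ascending (A @ [hd w])"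
  shows "mountain (A @ w)"
proof -
  from assms(1) obtain A' p B where w: "w = A' @ p # B" "ascending (A' @ [p])" "descending (p # B)"
    by (auto simp: mountain_def)
  have "hd w = hd (A' @ [p])" using w(1) by (cases A') auto
  then have "ascending ((A @ A') @ [p])"
    using assms(2) w(2) by (auto simp: successively_append_iff)
  then show ?thesis unfolding mountain_def using w by (metis append.assoc)
qed

lemma mountain_append_right:
  assumes "mountain w" "descending (last w # B)"
  shows "mountain (w @ B)"
proof -
  have "ascending (rev (last w # B))"
    using assms(2) by (simp only: successively_rev)
  moreover have "rev (last w # B) = rev B @ [hd (rev w)]"
    using mountain_not_Nil[OF assms(1)] by (simp add: hd_rev)
  ultimately have "ascending (rev B @ [hd (rev w)])" by (simp only:)
  then have "mountain (rev B @ rev w)" using assms(1) by (simp add: mountain_append_left)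
  then show ?thesis by (metis mountain_rev rev_append)
qed

lemma mountain_embed:
  assumes "mountain w" "ascending (A @ [p])" "hd w = p" "descending (q # B)" "last w = q"
  shows "mountain (A @ w @ B)" "hd (A @ w @ B) = hd (A @ [p])" "last (A @ w @ B) = last (q # B)"
proof -
  have "w \<noteq> []" using assms(1) by (rule mountain_not_Nil)
  have "mountain (A @ w)" using mountain_append_left[OF assms(1)] assms(2,3) by simp
  moreover have "last (A @ w) = q" using assms(5) \<open>w \<noteq> []\<close> by simp
  ultimately show "mountain (A @ w @ B)" using mountain_append_right assms(4) by fastforce
  show "hd (A @ w @ B) = hd (A @ [p])" using assms(3) \<open>w \<noteq> []\<close> by (cases A) simp_all
  show "last (A @ w @ B) = last (q # B)" using assms(5) \<open>w \<noteq> []\<close> by simp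
qed

lemma mountain_if_nth:
  assumes k: "k < length gs"
    and up: "\<forall>j. 1 \<le> j \<and> j \<le> k \<longrightarrow> child_of (gs ! (j - 1)) (gs ! j)"
    and down: "\<forall>j. k < j \<and> j < length gs \<longrightarrow> child_of (gs ! j) (gs ! (j - 1))"
  shows "mountain gs"
proof -
  have "ascending (take (Suc k) gs)"
    unfolding successively_conv_nth using up[rule_format, of "Suc _"] by simp
  moreover have "descending (drop k gs)"
    unfolding successively_conv_nth using down[rule_format, of "k + Suc _"] k by simp
  moreover have "take (Suc k) gs = take k gs @ [gs ! k]" "drop k gs = gs ! k # drop (Suc k) gs"
    using k by (simp_all add: take_Suc_conv_app_nth Cons_nth_drop_Suc)
  ultimately show ?thesis
    unfolding mountain_def using id_take_nth_drop[OF k] by metis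
qed

lemma Gamma_i_level_unique: "Gamma_i X i g \<Longrightarrow> Gamma_i X j g \<Longrightarrow> i = j"
proof (induction arbitrary: j rule: Gamma_i.induct)
  case g0
  from g0.prems show ?case by (cases rule: Gamma_i.cases) auto
next
  case (g1 x)
  from g1.prems show ?case by (cases rule: Gamma_i.cases) auto
next
  case (gT i a c b)
  from gT.prems show ?case by (cases rule: Gamma_i.cases) (auto dest: gT.IH(1))
qed

lemma Gamma_i_Suc_not_GOne: "Gamma_i X (Suc i) g \<Longrightarrow> g \<noteq> GOne"
  using Gamma_i_level_unique Gamma_i.g0 by blast

lemma GOne_in_Gamma [simp]: "GOne \<in> Gamma X"
  unfolding Gamma_def by (auto intro: Gamma_i.g0)

lemma Gamma_i_in_Gamma: "Gamma_i X i g \<Longrightarrow> g \<in> Gamma X"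
  unfolding Gamma_def by auto

lemma Gamma_children:
  assumes "g \<in> Gamma X"
  shows "gl g \<in> Gamma X" "gr g \<in> Gamma X" "gc g \<in> Gamma X"
proof -
  obtain i where "Gamma_i X i g" using assms unfolding Gamma_def by auto
  then have "gl g \<in> Gamma X \<and> gr g \<in> Gamma X \<and> gc g \<in> Gamma X"
    by (cases rule: Gamma_i.cases) (auto intro: Gamma_i_in_Gamma Gamma_i.intros)
  then show "gl g \<in> Gamma X" "gr g \<in> Gamma X" "gc g \<in> Gamma X" by simp_all
qed

lemma GT_parts_in_Gamma:
  assumes "GT l c r \<in> Gamma X"
  shows "l \<in> Gamma X" "c \<in> Gamma X" "r \<in> Gamma X"
  using Gamma_children[OF assms] by simp_all

lemma Gamma_i_parent:
  assumes "child_of h g" "Gamma_i X i h" "g \<in> Gamma X"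
  shows "Gamma_i X (Suc i) g"
proof -
  obtain j where g: "Gamma_i X j g" using assms(3) unfolding Gamma_def by auto
  then show ?thesis
  proof (cases rule: Gamma_i.cases)
    case g0
    then show ?thesis using assms(1) by (simp add: child_of_def)
  next
    case (g1 x)
    then have "Gamma_i X i GOne" using assms(1,2) by (simp add: child_of_def)
    then have "i = 0" using Gamma_i_level_unique Gamma_i.g0 by blast
    then show ?thesis using g g1 by simp
  next
    case (gT j' l c r)
    then have "Gamma_i X (Suc j') h" using assms(1) by (auto simp: child_of_def)
    then show ?thesis using g gT Gamma_i_level_unique[OF assms(2)] by simp
  qed
qed

lemma rho_words: "rho X u v \<Longrightarrow> u \<in> words X \<and> v \<in> words X"
  by (induction rule: rho.induct)
    (auto simp: words_def dest!: Gamma_i_in_Gamma intro: Gamma_children)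

lemma rho_refl: "u \<noteq> [] \<Longrightarrow> set u \<subseteq> Gamma X \<Longrightarrow> rho X u u"
  by (rule rho.refl) (simp add: words_def)

lemma rho_append: "rho X u u' \<Longrightarrow> rho X v v' \<Longrightarrow> rho X (u @ v) (u' @ v')"
proof -
  assume uu': "rho X u u'" and vv': "rho X v v'"
  then have "set u' \<subseteq> Gamma X" "set v \<subseteq> Gamma X"
    using rho_words[OF uu'] rho_words[OF vv'] by (simp_all add: words_def)
  then have "rho X ([] @ u @ v) ([] @ u' @ v)" "rho X (u' @ v @ []) (u' @ v' @ [])"
    using rho.ctx[OF uu', of "[]" v] rho.ctx[OF vv', of u' "[]"] by simp_all
  then show ?thesis by (auto intro: rho.trans)
qed

lemma rho_ctx:
  "rho X u v \<Longrightarrow> set p \<subseteq> Gamma X \<Longrightarrow> set q \<subseteq> Gamma X \<Longrightarrow>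
   u' = p @ u @ q \<Longrightarrow> v' = p @ v @ q \<Longrightarrow> rho X u' v'"
  using rho.ctx by blast

declare rho.trans [trans]

lemma rho_GT_relations:
  assumes "GT l c r \<in> Gamma X"
  shows "rho X [c, l, GT l c r] [GT l c r]"
    and "rho X [GT l c r, r, c] [GT l c r]"
    and "rho X [r, c, GT l c r, c, l] [r, c, l]"
proof -
  obtain i where i: "Gamma_i X i (GT l c r)" using assms unfolding Gamma_def by auto
  then have "2 \<le> i" by (cases rule: Gamma_i.cases) auto
  from rho.gen4[OF i this] rho.gen5[OF i this] rho.gen6[OF i this]
  show "rho X [c, l, GT l c r] [GT l c r]" "rho X [GT l c r, r, c] [GT l c r]"
    "rho X [r, c, GT l c r, c, l] [r, c, l]"
    by simp_all
qed

lemma rho_center_left: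
  assumes g: "GT l c r \<in> Gamma X"
  shows "rho X [c, GT l c r] [GT l c r]"
proof -
  note parts = GT_parts_in_Gamma[OF g]
  have "rho X [c, GT l c r] [c, c, l, GT l c r]"
    by (rule rho.sym, rule rho_ctx[OF rho_GT_relations(1)[OF g], of "[c]" "[]"])
      (use parts in simp_all)
  also have "rho X \<dots> [c, l, GT l c r]"
    by (rule rho_ctx[OF rho.gen3[OF parts(2)], of "[]" "[l, GT l c r]"])
      (use parts g in simp_all)
  also have "rho X \<dots> [GT l c r]" by (rule rho_GT_relations(1)[OF g])
  finally show ?thesis .
qed

lemma rho_center_right:
  assumes g: "GT l c r \<in> Gamma X"
  shows "rho X [GT l c r, c] [GT l c r]"
proof -
  note parts = GT_parts_in_Gamma[OF g]
  have "rho X [GT l c r, c] [GT l c r, r, c, c]"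
    by (rule rho.sym, rule rho_ctx[OF rho_GT_relations(2)[OF g], of "[]" "[c]"])
      (use parts in simp_all)
  also have "rho X \<dots> [GT l c r, r, c]"
    by (rule rho_ctx[OF rho.gen3[OF parts(2)], of "[GT l c r, r]" "[]"])
      (use parts g in simp_all)
  also have "rho X \<dots> [GT l c r]" by (rule rho_GT_relations(2)[OF g])
  finally show ?thesis .
qed

lemma rho_valley_to_peak:
  assumes g: "GT l c r \<in> Gamma X"
  shows "rho X [r, c, l] [r, GT l c r, l]"
proof -
  note parts = GT_parts_in_Gamma[OF g]
  have "rho X [r, c, l] [r, c, GT l c r, c, l]"
    by (rule rho.sym, rule rho_GT_relations(3)[OF g])
  also have "rho X \<dots> [r, GT l c r, c, l]"
    by (rule rho_ctx[OF rho_center_left[OF g], of "[r]" "[c, l]"]) (use parts in simp_all)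
  also have "rho X \<dots> [r, GT l c r, l]"
    by (rule rho_ctx[OF rho_center_right[OF g], of "[r]" "[l]"]) (use parts in simp_all)
  finally show ?thesis .
qed

lemma rho_absorb_child:
  assumes g: "g \<in> Gamma X" and h: "child_of h g"
  shows "rho X [g, h, g] [g]"
proof (cases g)
  case GOne
  then show ?thesis using h by (simp add: child_of_def)
next
  case (GX x)
  then have "h = GOne" using h by (simp add: child_of_def)
  then have "rho X [g, h, g] [g, g]"
    using rho_ctx[OF rho.gen2[OF g], of "[]" "[g]"] g by simp
  also have "rho X \<dots> [g]" by (rule rho.gen3[OF g])
  finally show ?thesis .
next
  case (GT l c r)
  have g': "GT l c r \<in> Gamma X" using g GT by simp
  note parts = GT_parts_in_Gamma[OF g']
  have "h = l \<or> h = r" using h GT by (auto simp: child_of_def)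
  then have "rho X [g, h, g] [g, g]"
  proof
    assume "h = l"
    have "rho X [g, l, g] [g, c, l, g]"
      by (rule rho.sym, rule rho_ctx[OF rho_center_right[OF g'], of "[]" "[l, g]"])
        (use g GT parts in simp_all)
    also have "rho X \<dots> [g, g]"
      by (rule rho_ctx[OF rho_GT_relations(1)[OF g'], of "[g]" "[]"]) (use g GT in simp_all)
    finally show ?thesis using \<open>h = l\<close> by simp
  next
    assume "h = r"
    have "rho X [g, r, g] [g, r, c, g]"
      by (rule rho.sym, rule rho_ctx[OF rho_center_left[OF g'], of "[g, r]" "[]"])
        (use g GT parts in simp_all)
    also have "rho X \<dots> [g, g]"
      by (rule rho_ctx[OF rho_GT_relations(2)[OF g'], of "[]" "[g]"]) (use g GT in simp_all)
    finally show ?thesis using \<open>h = r\<close> by simp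
  qed
  also have "rho X \<dots> [g]" by (rule rho.gen3[OF g])
  finally show ?thesis .
qed

lemma rho_round_trip:
  "descending (p # ys) \<Longrightarrow> set (p # ys) \<subseteq> Gamma X \<Longrightarrow> rho X (p # ys @ rev ys @ [p]) [p]"
proof (induction ys arbitrary: p)
  case Nil
  then show ?case using rho.gen3[of p X] by simp
next
  case (Cons q ys)
  then have IH: "rho X (q # ys @ rev ys @ [q]) [q]" and q: "child_of q p" by simp_all
  have "rho X (p # (q # ys) @ rev (q # ys) @ [p]) [p, q, p]"
    by (rule rho_ctx[OF IH, of "[p]" "[p]"]) (use Cons.prems in simp_all)
  also have "rho X \<dots> [p]" using rho_absorb_child[OF _ q] Cons.prems by simp
  finally show ?case .
qed

lemma rho_mountain_triple:
  assumes "mountain w" "set w \<subseteq> Gamma X"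
  shows "rho X (w @ rev w @ w) w"
proof -
  obtain A p B where w: "w = A @ p # B" "ascending (A @ [p])" "descending (p # B)"
    using assms(1) by (auto simp: mountain_def)
  have "descending (p # rev A)"
    using w(2) by (metis rev.simps(2) rev_rev_ident successively_rev)
  moreover have "set (p # rev A) \<subseteq> Gamma X" "set (p # B) \<subseteq> Gamma X"
    using assms(2) w(1) by auto
  ultimately have A: "rho X (p # rev A @ A @ [p]) [p]" and B: "rho X (p # B @ rev B @ [p]) [p]"
    using rho_round_trip w(3) by fastforce+
  have "rho X (w @ rev w @ w) (A @ [p] @ rev A @ A @ p # B)"
    by (rule rho_ctx[OF B, of A "rev A @ A @ p # B"]) (use assms(2) w in auto)
  also have "rho X \<dots> w"
    by (rule rho_ctx[OF A, of A B]) (use assms(2) w in auto)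
  finally show ?thesis .
qed

lemma rho_ascent_from_GOne:
  "Gamma_i X i g \<Longrightarrow>
   \<exists>A. ascending (A @ [g]) \<and> hd (A @ [g]) = GOne \<and> set A \<subseteq> Gamma X \<and> rho X (A @ [g]) [g]"
proof (induction rule: Gamma_i.induct)
  case g0
  show ?case by (rule exI[of _ "[]"]) (simp add: rho_refl)
next
  case (g1 x)
  then have "GX x \<in> Gamma X" by (auto intro: Gamma_i_in_Gamma Gamma_i.g1)
  then show ?case by (intro exI[of _ "[GOne]"]) (simp add: child_of_def rho.gen1)
next
  case (gT i a c b)
  let ?g = "GT a c b"
  have g: "?g \<in> Gamma X" using gT.hyps by (auto intro: Gamma_i_in_Gamma Gamma_i.gT)
  note parts = GT_parts_in_Gamma[OF g]
  obtain A where A: "ascending (A @ [c])" "hd (A @ [c]) = GOne" "set A \<subseteq> Gamma X"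
    "rho X (A @ [c]) [c]"
    using gT.IH(2) by blast
  have "child_of c a" "child_of a ?g"
    using gT.hyps Gamma_i_Suc_not_GOne[OF gT.hyps(1)] by (auto simp: child_of_def)
  then have "ascending ((A @ [c, a]) @ [?g])"
    using A(1) by (simp add: successively_append_iff)
  moreover have "hd ((A @ [c, a]) @ [?g]) = GOne" using A(2) by (cases A) simp_all
  moreover have "rho X ((A @ [c, a]) @ [?g]) [?g]"
  proof -
    have "rho X ((A @ [c, a]) @ [?g]) [c, a, ?g]"
      by (rule rho_ctx[OF A(4), of "[]" "[a, ?g]"]) (use parts g in simp_all)
    also have "rho X \<dots> [?g]" by (rule rho_GT_relations(1)[OF g])
    finally show ?thesis .
  qed
  ultimately show ?case using A(3) parts by (intro exI[of _ "A @ [c, a]"]) simp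
qed

lemma rho_descent_to_GOne:
  "Gamma_i X i g \<Longrightarrow>
   \<exists>B. descending (g # B) \<and> last (g # B) = GOne \<and> set B \<subseteq> Gamma X \<and> rho X (g # B) [g]"
proof (induction rule: Gamma_i.induct)
  case g0
  show ?case by (rule exI[of _ "[]"]) (simp add: rho_refl)
next
  case (g1 x)
  then have "GX x \<in> Gamma X" by (auto intro: Gamma_i_in_Gamma Gamma_i.g1)
  then show ?case by (intro exI[of _ "[GOne]"]) (simp add: child_of_def rho.gen2)
next
  case (gT i a c b)
  let ?g = "GT a c b"
  have g: "?g \<in> Gamma X" using gT.hyps by (auto intro: Gamma_i_in_Gamma Gamma_i.gT)
  note parts = GT_parts_in_Gamma[OF g]
  obtain B where B: "descending (c # B)" "last (c # B) = GOne" "set B \<subseteq> Gamma X"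
    "rho X (c # B) [c]"
    using gT.IH(2) by blast
  have "child_of c b" "child_of b ?g"
    using gT.hyps Gamma_i_Suc_not_GOne[OF gT.hyps(3)] by (auto simp: child_of_def)
  then have "descending (?g # b # c # B)" using B(1) by simp
  moreover have "rho X (?g # b # c # B) [?g]"
  proof -
    have "rho X (?g # b # c # B) [?g, b, c]"
      by (rule rho_ctx[OF B(4), of "[?g, b]" "[]"]) (use parts g in simp_all)
    also have "rho X \<dots> [?g]" by (rule rho_GT_relations(2)[OF g])
    finally show ?thesis .
  qed
  ultimately show ?case using B(2,3) parts by (intro exI[of _ "b # c # B"]) simp
qed

lemma generator_mountain:
  assumes "g \<in> Gamma X"
  shows "\<exists>w. mountain w \<and> hd w = GOne \<and> last w = GOne \<and> set w \<subseteq> Gamma X \<and> rho X [g] w"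
proof -
  obtain i where i: "Gamma_i X i g" using assms unfolding Gamma_def by auto
  obtain A where A: "ascending (A @ [g])" "hd (A @ [g]) = GOne" "set A \<subseteq> Gamma X"
    "rho X (A @ [g]) [g]"
    using rho_ascent_from_GOne[OF i] by blast
  obtain B where B: "descending (g # B)" "last (g # B) = GOne" "set B \<subseteq> Gamma X"
    "rho X (g # B) [g]"
    using rho_descent_to_GOne[OF i] by blast
  have "mountain (A @ g # B)" using A(1) B(1) by (auto simp: mountain_def)
  moreover have "rho X (A @ g # B) [g]"
  proof -
    have "rho X (A @ g # B) (g # B)"
      by (rule rho_ctx[OF A(4), of "[]" B]) (use B(3) in simp_all)
    also have "rho X \<dots> [g]" by (rule B(4))
    finally show ?thesis .
  qed
  moreover have "hd (A @ g # B) = GOne" "last (A @ g # B) = GOne"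
    using A(2) B(2) by (cases A; simp)+
  ultimately show ?thesis
    using assms A(3) B(3) by (intro exI[of _ "A @ g # B"]) (auto intro: rho.sym)
qed

lemma valley_step_mountain:
  assumes "child_of m a" "ascending (m # B)" "set (a # m # B) \<subseteq> Gamma X"
  shows "\<exists>w. mountain w \<and> hd w = a \<and> last w = last (m # B) \<and> set w \<subseteq> Gamma X \<and>
    rho X (a # m # B) w"
  using assms
proof (induction B arbitrary: a m)
  case Nil
  then show ?case by (intro exI[of _ "[a, m]"]) (simp add: mountain_if_descending rho_refl)
next
  case (Cons b B)
  then have mb: "child_of m b" and asc: "ascending (b # B)"
    and sets: "a \<in> Gamma X" "m \<in> Gamma X" "b \<in> Gamma X" "set B \<subseteq> Gamma X" by simp_all
  show ?case
  proof (cases "a = b")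
    case True
    have "rho X (a # m # b # B) (a # B)"
      by (rule rho_ctx[OF rho_absorb_child[OF sets(1) Cons.prems(1)], of "[]" B])
        (use True sets in simp_all)
    then show ?thesis
      using True asc sets by (intro exI[of _ "a # B"]) (simp add: mountain_if_ascending)
  next
    case False
    obtain i where m: "Gamma_i X i m" using sets(2) unfolding Gamma_def by auto
    let ?g = "GT b m a"
    have "Gamma_i X (Suc (Suc i)) ?g"
      using Gamma_i_parent[OF mb m sets(3)] Gamma_i_parent[OF Cons.prems(1) m sets(1)]
        False Cons.prems(1) mb
      by (intro Gamma_i.gT[OF _ m]) (auto simp: child_of_def)
    then have g: "?g \<in> Gamma X" by (rule Gamma_i_in_Gamma)
    obtain w where w: "mountain w" "hd w = ?g" "last w = last (b # B)" "set w \<subseteq> Gamma X"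
      "rho X (?g # b # B) w"
      using Cons.IH[of b ?g] asc sets g by (auto simp: child_of_def)
    have "mountain (a # w)"
      using mountain_append_left[OF w(1), of "[a]"] w(2) by (simp add: child_of_def)
    moreover have "rho X (a # m # b # B) (a # w)"
    proof -
      have "rho X (a # m # b # B) (a # ?g # b # B)"
        by (rule rho_ctx[OF rho_valley_to_peak[OF g], of "[]" B]) (use sets in simp_all)
      also have "rho X \<dots> (a # w)"
        by (rule rho_ctx[OF w(5), of "[a]" "[]"]) (use sets in simp_all)
      finally show ?thesis .
    qed
    ultimately show ?thesis
      using w sets mountain_not_Nil[OF w(1)] by (intro exI[of _ "a # w"]) simp
  qed
qed

lemma valley_mountain:
  assumes "descending (A @ [m])" "ascending (m # B)" "set (A @ m # B) \<subseteq> Gamma X"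
  shows "\<exists>w. mountain w \<and> hd w = hd (A @ [m]) \<and> last w = last (m # B) \<and> set w \<subseteq> Gamma X \<and>
    rho X (A @ m # B) w"
  using assms
proof (induction A arbitrary: m B rule: rev_induct)
  case Nil
  then show ?case by (intro exI[of _ "m # B"]) (simp add: mountain_if_ascending rho_refl)
next
  case (snoc a A)
  then have desc: "descending (A @ [a])" and "child_of m a"
    by (simp_all add: successively_append_iff)
  have "set (a # m # B) \<subseteq> Gamma X" using snoc.prems(3) by simp
  then obtain w1 where w1: "mountain w1" "hd w1 = a" "last w1 = last (m # B)"
    "set w1 \<subseteq> Gamma X" "rho X (a # m # B) w1"
    using valley_step_mountain[OF \<open>child_of m a\<close> snoc.prems(2)] by blast
  obtain A1 p B1 where peak: "w1 = A1 @ p # B1" "ascending (A1 @ [p])" "descending (p # B1)"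
    using w1(1) by (auto simp: mountain_def)
  obtain T where T: "A1 @ [p] = a # T" using w1(2) peak(1) by (cases A1) auto
  have w1_eq: "w1 = (a # T) @ B1" using peak(1) T by (metis append.assoc append_Cons append_Nil)
  have "ascending (a # T)" using peak(2) T by simp
  moreover have "set (A @ a # T) \<subseteq> Gamma X" using w1(4) w1_eq snoc.prems(3) by simp
  ultimately obtain w2 where w2: "mountain w2" "hd w2 = hd (A @ [a])" "last w2 = last (a # T)"
    "set w2 \<subseteq> Gamma X" "rho X (A @ a # T) w2"
    using snoc.IH[OF desc] by blast
  have "last w2 = p" using w2(3) T by (metis last_snoc)
  then have "mountain (w2 @ B1)" using mountain_append_right[OF w2(1)] peak(3) by simp
  moreover have "rho X ((A @ [a]) @ m # B) (w2 @ B1)"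
  proof -
    have "rho X ((A @ [a]) @ m # B) (A @ w1)"
      by (rule rho_ctx[OF w1(5), of A "[]"]) (use snoc.prems(3) in simp_all)
    also have "rho X \<dots> (w2 @ B1)"
      by (rule rho_ctx[OF w2(5), of "[]" B1]) (use w1_eq w1(4) in simp_all)
    finally show ?thesis .
  qed
  moreover have "last (w2 @ B1) = last w1"
    using w1_eq w2(3) mountain_not_Nil[OF w2(1)] by (cases "B1 = []") simp_all
  ultimately show ?case
    using w2 w1(3,4) w1_eq mountain_not_Nil[OF w2(1)]
    by (intro exI[of _ "w2 @ B1"]) (cases A; simp)
qed

lemma mountain_join:
  assumes u: "mountain u" "set u \<subseteq> Gamma X" and v: "mountain v" "set v \<subseteq> Gamma X"
    and junction: "last u = hd v"
  shows "\<exists>w. mountain w \<and> hd w = hd u \<and> last w = last v \<and> set w \<subseteq> Gamma X \<and> rho X (u @ v) w"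
proof -
  obtain A1 p1 B1 where u_eq: "u = A1 @ p1 # B1" "ascending (A1 @ [p1])" "descending (p1 # B1)"
    using u(1) by (auto simp: mountain_def)
  obtain A2 p2 B2 where v_eq: "v = A2 @ p2 # B2" "ascending (A2 @ [p2])" "descending (p2 # B2)"
    using v(1) by (auto simp: mountain_def)
  define m where "m = last u"
  obtain D where D: "p1 # B1 = D @ [m]"
    using u_eq(1) unfolding m_def by (metis append_butlast_last_id last_appendR list.distinct(1))
  obtain U where U: "A2 @ [p2] = m # U"
    using v_eq(1) junction unfolding m_def by (cases A2) auto
  have u_split: "u = A1 @ D @ [m]" using u_eq(1) D by simp
  have v_split: "v = m # U @ B2" using v_eq(1) U by (metis append.assoc append_Cons append_Nil)
  have sets: "set A1 \<subseteq> Gamma X" "set D \<subseteq> Gamma X" "m \<in> Gamma X" "set U \<subseteq> Gamma X"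
    "set B2 \<subseteq> Gamma X"
    using u(2) v(2) unfolding u_split v_split by simp_all
  obtain w where w: "mountain w" "hd w = hd (D @ [m])" "last w = last (m # U)"
    "set w \<subseteq> Gamma X" "rho X (D @ m # U) w"
    using valley_mountain[of D m U X] u_eq(3) v_eq(2) D U sets by (auto simp del: append_Cons)
  have "hd w = p1" using w(2) D by (metis list.sel(1))
  moreover have "last w = p2" using w(3) U by (metis last_snoc)
  ultimately have "mountain (A1 @ w @ B2)" "hd (A1 @ w @ B2) = hd u" "last (A1 @ w @ B2) = last v"
    using mountain_embed[OF w(1) u_eq(2) _ v_eq(3)] u_eq(1) v_eq(1) by (simp_all add: hd_append)
  moreover have "rho X (u @ v) (A1 @ w @ B2)"
  proof -
    have "rho X (u @ v) (A1 @ (D @ m # U) @ B2)"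
      by (rule rho_ctx[OF rho.gen3[OF sets(3)], of "A1 @ D" "U @ B2"])
        (use sets u_split v_split in simp_all)
    also have "rho X \<dots> (A1 @ w @ B2)"
      by (rule rho_ctx[OF w(5)]) (use sets in simp_all)
    finally show ?thesis .
  qed
  ultimately show ?thesis using sets w(4) by (intro exI[of _ "A1 @ w @ B2"]) simp
qed

lemma word_mountain:
  "u \<in> words X \<Longrightarrow>
   \<exists>w. mountain w \<and> hd w = GOne \<and> last w = GOne \<and> set w \<subseteq> Gamma X \<and> rho X u w"
proof (induction u)
  case Nil
  then show ?case by (simp add: words_def)
next
  case (Cons g u)
  then have g: "g \<in> Gamma X" by (simp add: words_def)
  obtain w1 where w1: "mountain w1" "hd w1 = GOne" "last w1 = GOne" "set w1 \<subseteq> Gamma X"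
    "rho X [g] w1"
    using generator_mountain[OF g] by blast
  show ?case
  proof (cases "u = []")
    case True
    then show ?thesis using w1 by auto
  next
    case False
    then obtain w2 where w2: "mountain w2" "hd w2 = GOne" "last w2 = GOne" "set w2 \<subseteq> Gamma X"
      "rho X u w2"
      using Cons by (auto simp: words_def)
    obtain w where "mountain w" "hd w = GOne" "last w = GOne" "set w \<subseteq> Gamma X"
      "rho X (w1 @ w2) w"
      using mountain_join[OF w1(1,4) w2(1,4)] w1(2,3) w2(2,3) by auto
    moreover have "rho X ([g] @ u) (w1 @ w2)" by (rule rho_append[OF w1(5) w2(5)])
    ultimately show ?thesis by (auto intro: rho.trans)
  qed
qed

lemma rho_class_eq: "rho X u v \<Longrightarrow> rho_class X u = rho_class X v"
  unfolding rho_class_def by (auto intro: rho.trans rho.sym)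

lemma FT1_carrier: "carrier (FT1 X) = rho_class X ` words X"
  by (simp add: FT1_def)

lemma FT1_one: "\<one>\<^bsub>FT1 X\<^esub> = rho_class X [GOne]"
  by (simp add: FT1_def)

lemma FT1_mult_class:
  assumes "u \<in> words X" "v \<in> words X"
  shows "rho_class X u \<otimes>\<^bsub>FT1 X\<^esub> rho_class X v = rho_class X (u @ v)"
proof -
  have "{w. \<exists>u'\<in>rho_class X u. \<exists>v'\<in>rho_class X v. rho X (u' @ v') w} = rho_class X (u @ v)"
    using assms unfolding rho_class_def by (auto intro: rho.trans rho_append rho.refl)
  then show ?thesis by (simp add: FT1_def)
qed

lemma rho_GOne_left:
  assumes "u \<in> words X"
  shows "rho X (GOne # u) u"
proof -
  obtain g v where "u = g # v" "g \<in> Gamma X" "set v \<subseteq> Gamma X"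
    using assms by (cases u) (auto simp: words_def)
  then show ?thesis using rho_ctx[OF rho.gen1[OF \<open>g \<in> Gamma X\<close>], of "[]" v] by simp
qed

lemma rho_GOne_right:
  assumes "u \<in> words X"
  shows "rho X (u @ [GOne]) u"
proof -
  obtain g v where "u = v @ [g]" "g \<in> Gamma X" "set v \<subseteq> Gamma X"
    using assms by (cases u rule: rev_cases) (auto simp: words_def)
  then show ?thesis using rho_ctx[OF rho.gen2[OF \<open>g \<in> Gamma X\<close>], of v "[]"] by simp
qed

lemma words_append [simp]: "u \<in> words X \<Longrightarrow> v \<in> words X \<Longrightarrow> u @ v \<in> words X"
  by (simp add: words_def)

lemma FT1_monoid: "monoid (FT1 X)"
proof (rule monoidI)
  fix x y assume "x \<in> carrier (FT1 X)" "y \<in> carrier (FT1 X)"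
  then show "x \<otimes>\<^bsub>FT1 X\<^esub> y \<in> carrier (FT1 X)"
    by (auto simp: FT1_carrier FT1_mult_class)
next
  show "\<one>\<^bsub>FT1 X\<^esub> \<in> carrier (FT1 X)"
    by (simp add: FT1_carrier FT1_one words_def)
next
  fix x y z assume "x \<in> carrier (FT1 X)" "y \<in> carrier (FT1 X)" "z \<in> carrier (FT1 X)"
  then show "x \<otimes>\<^bsub>FT1 X\<^esub> y \<otimes>\<^bsub>FT1 X\<^esub> z = x \<otimes>\<^bsub>FT1 X\<^esub> (y \<otimes>\<^bsub>FT1 X\<^esub> z)"
    by (auto simp: FT1_carrier FT1_mult_class)
next
  fix x assume "x \<in> carrier (FT1 X)"
  then obtain u where u: "u \<in> words X" "x = rho_class X u" by (auto simp: FT1_carrier)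
  have one: "[GOne] \<in> words X" by (simp add: words_def)
  show "\<one>\<^bsub>FT1 X\<^esub> \<otimes>\<^bsub>FT1 X\<^esub> x = x"
    using u one rho_class_eq[OF rho_GOne_left[OF u(1)]] by (simp add: FT1_one FT1_mult_class)
  show "x \<otimes>\<^bsub>FT1 X\<^esub> \<one>\<^bsub>FT1 X\<^esub> = x"
    using u one rho_class_eq[OF rho_GOne_right[OF u(1)]] by (simp add: FT1_one FT1_mult_class)
qed

lemma FT1_mountain_inverse:
  assumes "mountain w" "set w \<subseteq> Gamma X"
  shows "is_inverse (FT1 X) (rho_class X w) (rho_class X (rev w))"
proof -
  have words: "w \<in> words X" "rev w \<in> words X"
    using assms mountain_not_Nil by (auto simp: words_def)
  have "rho X (w @ rev w @ w) w" using assms by (rule rho_mountain_triple)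
  moreover have "rho X (rev w @ rev (rev w) @ rev w) (rev w)"
    by (rule rho_mountain_triple) (use assms in simp_all)
  ultimately show ?thesis
    using words by (simp add: is_inverse_def FT1_mult_class rho_class_eq)
qed

lemma FT1_regular: "regular_monoid (FT1 X)"
  unfolding regular_monoid_def
proof (intro conjI ballI FT1_monoid)
  fix a assume "a \<in> carrier (FT1 X)"
  then obtain u where u: "u \<in> words X" "a = rho_class X u" by (auto simp: FT1_carrier)
  then obtain w where w: "mountain w" "set w \<subseteq> Gamma X" "rho X u w"
    using word_mountain by blast
  have "a = rho_class X w" using u(2) rho_class_eq[OF w(3)] by simp
  moreover have "rev w \<in> words X" using w mountain_not_Nil by (simp add: words_def)
  then have "rho_class X (rev w) \<in> carrier (FT1 X)" by (simp add: FT1_carrier)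
  ultimately show "\<exists>b\<in>carrier (FT1 X). a \<otimes>\<^bsub>FT1 X\<^esub> b \<otimes>\<^bsub>FT1 X\<^esub> a = a"
    using FT1_mountain_inverse[OF w(1,2)] by (auto simp: is_inverse_def)
qed

lemma FT1_product_of_generators:
  "set u \<subseteq> Gamma X \<Longrightarrow>
   foldr (\<lambda>e acc. e \<otimes>\<^bsub>FT1 X\<^esub> acc) (map (\<lambda>g. rho_class X [g]) u) \<one>\<^bsub>FT1 X\<^esub> =
   rho_class X (u @ [GOne])"
proof (induction u)
  case Nil
  then show ?case by (simp add: FT1_one)
next
  case (Cons g u)
  have "[g] \<in> words X" "u @ [GOne] \<in> words X" using Cons.prems by (auto simp: words_def)
  then show ?case using Cons by (simp add: FT1_mult_class)
qed

lemma FT1_idempotent_generated: "idempotent_generated (FT1 X)"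
  unfolding idempotent_generated_def
proof
  fix a assume "a \<in> carrier (FT1 X)"
  then obtain u where u: "u \<in> words X" "a = rho_class X u" by (auto simp: FT1_carrier)
  let ?es = "map (\<lambda>g. rho_class X [g]) u"
  have "set ?es \<subseteq> {e \<in> carrier (FT1 X). e \<otimes>\<^bsub>FT1 X\<^esub> e = e}"
  proof
    fix e assume "e \<in> set ?es"
    then obtain g where g: "g \<in> Gamma X" "e = rho_class X [g]" using u(1) by (auto simp: words_def)
    then have "[g] \<in> words X" by (simp add: words_def)
    then show "e \<in> {e \<in> carrier (FT1 X). e \<otimes>\<^bsub>FT1 X\<^esub> e = e}"
      using g rho_class_eq[OF rho.gen3[OF g(1)]] by (simp add: FT1_carrier FT1_mult_class)
  qed
  moreover have "foldr (\<lambda>e acc. e \<otimes>\<^bsub>FT1 X\<^esub> acc) ?es \<one>\<^bsub>FT1 X\<^esub> = rho_class X (u @ [GOne])"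
    by (rule FT1_product_of_generators) (use u in \<open>simp add: words_def\<close>)
  then have "a = foldr (\<lambda>e acc. e \<otimes>\<^bsub>FT1 X\<^esub> acc) ?es \<one>\<^bsub>FT1 X\<^esub>"
    using u rho_class_eq[OF rho_GOne_right[OF u(1)]] by simp
  ultimately show "\<exists>es. set es \<subseteq> {e \<in> carrier (FT1 X). e \<otimes>\<^bsub>FT1 X\<^esub> e = e} \<and>
      a = foldr (\<lambda>e acc. e \<otimes>\<^bsub>FT1 X\<^esub> acc) es \<one>\<^bsub>FT1 X\<^esub>"
    by blast
qed

theorem proposition3p6:
  fixes X :: "'a set"
  assumes "X \<noteq> {}"
  shows "regular_monoid (FT1 X) \<and> idempotent_generated (FT1 X) \<and>
    (\<forall>gs n k. length gs = Suc n \<and> set gs \<subseteq> Gamma X \<and> 0 < k \<and> k < n \<and>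
       (\<forall>j. 1 \<le> j \<and> j \<le> k \<longrightarrow> gs ! j \<noteq> GOne \<and> gs ! (j - 1) \<in> {gl (gs ! j), gr (gs ! j)}) \<and>
       (\<forall>j. k < j \<and> j \<le> n \<longrightarrow> gs ! (j - 1) \<noteq> GOne \<and> gs ! j \<in> {gl (gs ! (j - 1)), gr (gs ! (j - 1))})
     \<longrightarrow> is_inverse (FT1 X) (rho_class X gs) (rho_class X (rev gs)))"
proof (intro conjI FT1_regular FT1_idempotent_generated allI impI, elim conjE)
  fix gs n k
  assume "length gs = Suc n" "set gs \<subseteq> Gamma X" "k < n"
    "\<forall>j. 1 \<le> j \<and> j \<le> k \<longrightarrow> gs ! j \<noteq> GOne \<and> gs ! (j - 1) \<in> {gl (gs ! j), gr (gs ! j)}"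
    "\<forall>j. k < j \<and> j \<le> n \<longrightarrow> gs ! (j - 1) \<noteq> GOne \<and> gs ! j \<in> {gl (gs ! (j - 1)), gr (gs ! (j - 1))}"
  then have "mountain gs"
    by (intro mountain_if_nth[of k]) (auto simp: child_of_def)
  then show "is_inverse (FT1 X) (rho_class X gs) (rho_class X (rev gs))"
    using FT1_mountain_inverse \<open>set gs \<subseteq> Gamma X\<close> by blast
qed

end
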